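(* Let $(N,+,* )$ be a planar nearring, presented by $(\Phi,R,M)$ as in the context. If $d\in D(N)$, then $d\Phi^*=d\Phi\cup\{0\}$ is closed under addition.
   Context: A (right) nearring $(N,+,* )$ is a set with a group $(N,+)$ (identity $0$, not necessarily abelian), a semigroup $(N,* )$, and right distributivity $(a+b)*c=a*c+b*c$ for all $a,b,c$. Elements $a,b$ are equivalent multipliers, $a\cong b$, if $x*a=x*b$ for all $x\in N$. $N$ is planar if $\cong$ has at least $3$ classes and for all $a,b,c\in N$ with $a\not\cong b$ the equation $x*a=x*b+c$ has a unique solution $x\in N$. Every planar nearring arises as follows, and we always consider it so presented. $\Phi\le \mathrm{Aut}(N,+)$ is a group of automorphisms acting on the right ($n\mapsto n\phi$), fixed point free (for $\phi\ne\mathrm{id}$, $n\phi=n$ iff $n=0$), and such that $n\mapsto -n+n\phi$ is bijective for every $\phi\ne \mathrm{id}$. $R$ is a set of representatives of the $\Phi$-orbits of $N\setminus\{0\}$ and $M\subseteq R$. Each $a\ne 0$ is uniquely $a=r_a\phi_a$ with $r_a\in R$, $\phi_a\in\Phi$. The multiplication is $a*b=0$ if $b=0$ or $r_b\in M$, and $a*b=a\phi_b$ otherwise (with $0*b=0$). For $a\in N$, $a\Phi$ is its orbit and $a\Phi^*=a\Phi\cup\{0\}$. The zero multipliers are the elements of $M\Phi\cup\{0\}$; equivalently $n$ is a zero multiplier iff $x*n=0$ for all $x\in N$. $D(N)=\{n\in N: n*(a+b)=n*a+n*b \text{ for all } a,b\in N\}$ is the set of distributive elements. $Z(\Phi)$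 is the centre of $\Phi$. *)

theory Defs
  imports Main
begin

text \<open>The additive group (N,+) is the whole type 'a (class group_add, not necessarily
abelian). Automorphisms act on the right: n phi is written as function application phi n.\<close>

definition is_aut :: "('a::group_add \<Rightarrow> 'a) \<Rightarrow> bool" where
  "is_aut f \<longleftrightarrow> bij f \<and> (\<forall>a b. f (a + b) = f a + f b)"

definition orbit :: "('a \<Rightarrow> 'a) set \<Rightarrow> 'a \<Rightarrow> 'a set" where
  "orbit \<Phi> a = (\<lambda>\<phi>. \<phi> a) ` \<Phi>"

definition orbit0 :: "('a::group_add \<Rightarrow> 'a) set \<Rightarrow> 'a \<Rightarrow> 'a set" where
  "orbit0 \<Phi> a = insert 0 (orbit \<Phi> a)"

text \<open>Data (Phi, R, M) of a planar nearring presentation (Ferrero construction).\<close>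
definition presentation ::
  "('a::group_add \<Rightarrow> 'a) set \<Rightarrow> 'a set \<Rightarrow> 'a set \<Rightarrow> bool" where
  "presentation \<Phi> R M \<longleftrightarrow>
     (\<forall>\<phi>\<in>\<Phi>. is_aut \<phi>) \<and> id \<in> \<Phi> \<and>
     (\<forall>\<phi>\<in>\<Phi>. \<forall>\<psi>\<in>\<Phi>. \<psi> \<circ> \<phi> \<in> \<Phi>) \<and> (\<forall>\<phi>\<in>\<Phi>. inv \<phi> \<in> \<Phi>) \<and>
     (\<forall>\<phi>\<in>\<Phi>. \<phi> \<noteq> id \<longrightarrow> (\<forall>n. \<phi> n = n \<longleftrightarrow> n = 0)) \<and>
     (\<forall>\<phi>\<in>\<Phi>. \<phi> \<noteq> id \<longrightarrow> bij (\<lambda>n. - n + \<phi> n)) \<and>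
     R \<subseteq> - {0} \<and>
     (\<forall>a. a \<noteq> 0 \<longrightarrow> (\<exists>!r. r \<in> R \<and> a \<in> orbit \<Phi> r)) \<and>
     M \<subseteq> R"

definition rep :: "('a \<Rightarrow> 'a) set \<Rightarrow> 'a set \<Rightarrow> 'a \<Rightarrow> 'a" where
  "rep \<Phi> R a = (THE r. r \<in> R \<and> a \<in> orbit \<Phi> r)"

definition phi_of :: "('a \<Rightarrow> 'a) set \<Rightarrow> 'a set \<Rightarrow> 'a \<Rightarrow> ('a \<Rightarrow> 'a)" where
  "phi_of \<Phi> R a = (THE \<phi>. \<phi> \<in> \<Phi> \<and> a = \<phi> (rep \<Phi> R a))"

definition nr_mult ::
  "('a::group_add \<Rightarrow> 'a) set \<Rightarrow> 'a set \<Rightarrow> 'a set \<Rightarrow> 'a \<Rightarrow> 'a \<Rightarrow> 'a" where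
  "nr_mult \<Phi> R M a b =
     (if b = 0 \<or> rep \<Phi> R b \<in> M then 0 else phi_of \<Phi> R b a)"

definition equiv_mult :: "('a \<Rightarrow> 'a \<Rightarrow> 'a) \<Rightarrow> 'a \<Rightarrow> 'a \<Rightarrow> bool" where
  "equiv_mult mult a b \<longleftrightarrow> (\<forall>x. mult x a = mult x b)"

definition planar :: "('a::group_add \<Rightarrow> 'a \<Rightarrow> 'a) \<Rightarrow> bool" where
  "planar mult \<longleftrightarrow>
     (\<exists>a b c. \<not> equiv_mult mult a b \<and> \<not> equiv_mult mult a c \<and> \<not> equiv_mult mult b c) \<and>
     (\<forall>a b c. \<not> equiv_mult mult a b \<longrightarrow> (\<exists>!x. mult x a = mult x b + c))"

definition distributive_elems :: "('a::group_add \<Rightarrow> 'a \<Rightarrow> 'a) \<Rightarrow> 'a set" where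
  "distributive_elems mult = {n. \<forall>a b. mult n (a + b) = mult n a + mult n b}"

end

theory Submission
  imports Defs
begin

text \<open>Choose a representative \<open>r \<in> R\<close> outside \<open>M\<close>; one exists since otherwise all products
vanish and \<open>\<cong>\<close> has a single class. Then \<open>d * (r\<phi>) = d\<phi>\<close>, so \<open>d\<Phi>\<^sup>*\<close> is exactly the image of
left multiplication by \<open>d\<close>, and that image is closed under addition when \<open>d\<close> is distributive.\<close>

lemma is_aut_zero:
  assumes "is_aut f"
  shows "f 0 = 0"
proof -
  have "f 0 + f 0 = f 0 + 0"
    using assms unfolding is_aut_def by (metis add.right_neutral)
  then show ?thesis
    by (rule add_left_imp_eq)
qed

lemma is_aut_nonzero:
  assumes "is_aut f" and "a \<noteq> 0"
  shows "f a \<noteq> 0"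
  using assms is_aut_zero[OF assms(1)] unfolding is_aut_def by (metis bij_is_inj injD)

lemma presentationD:
  assumes "presentation \<Phi> R M"
  shows presentation_aut: "\<And>\<phi>. \<phi> \<in> \<Phi> \<Longrightarrow> is_aut \<phi>"
    and presentation_comp: "\<And>\<phi> \<psi>. \<phi> \<in> \<Phi> \<Longrightarrow> \<psi> \<in> \<Phi> \<Longrightarrow> \<psi> \<circ> \<phi> \<in> \<Phi>"
    and presentation_inv: "\<And>\<phi>. \<phi> \<in> \<Phi> \<Longrightarrow> inv \<phi> \<in> \<Phi>"
    and presentation_fixpoint_free: "\<And>\<phi> n. \<phi> \<in> \<Phi> \<Longrightarrow> \<phi> \<noteq> id \<Longrightarrow> \<phi> n = n \<Longrightarrow> n = 0"
    and presentation_rep_nonzero: "\<And>r. r \<in> R \<Longrightarrow> r \<noteq> 0"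
    and presentation_ex1_rep: "\<And>a. a \<noteq> 0 \<Longrightarrow> \<exists>!r. r \<in> R \<and> a \<in> orbit \<Phi> r"
  using assms unfolding presentation_def by auto

lemma presentation_orbit_nonzero:
  assumes "presentation \<Phi> R M" and "\<phi> \<in> \<Phi>" and "a \<noteq> 0"
  shows "\<phi> a \<noteq> 0"
  using is_aut_nonzero presentation_aut assms by blast

text \<open>Fixed point freeness: an element of \<open>\<Phi>\<close> is determined by its value at any \<open>a \<noteq> 0\<close>.\<close>

lemma presentation_eq_if_agree:
  assumes P: "presentation \<Phi> R M" and "\<phi> \<in> \<Phi>" "\<psi> \<in> \<Phi>" "a \<noteq> 0" "\<phi> a = \<psi> a"
  shows "\<phi> = \<psi>"
proof -
  have bij: "bij \<psi>"
    using presentation_aut[OF P \<open>\<psi> \<in> \<Phi>\<close>] unfolding is_aut_def by blast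
  have "inv \<psi> \<circ> \<phi> \<in> \<Phi>"
    using assms(2,3) presentation_comp[OF P] presentation_inv[OF P] by blast
  moreover have "(inv \<psi> \<circ> \<phi>) a = a"
    using \<open>\<phi> a = \<psi> a\<close> bij by (simp add: bij_is_inj)
  ultimately have "inv \<psi> \<circ> \<phi> = id"
    using presentation_fixpoint_free[OF P] \<open>a \<noteq> 0\<close> by blast
  then have "\<psi> \<circ> (inv \<psi> \<circ> \<phi>) = \<psi>"
    by simp
  moreover have "\<psi> \<circ> (inv \<psi> \<circ> \<phi>) = \<phi>"
    using bij by (simp add: fun_eq_iff bij_is_surj surj_f_inv_f)
  ultimately show ?thesis
    by simp
qed

lemma rep_phi_of_orbit:
  assumes P: "presentation \<Phi> R M" and "r \<in> R" and "\<phi> \<in> \<Phi>"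
  shows "rep \<Phi> R (\<phi> r) = r" and "phi_of \<Phi> R (\<phi> r) = \<phi>"
proof -
  have r: "r \<noteq> 0"
    using presentation_rep_nonzero[OF P \<open>r \<in> R\<close>] .
  have "\<phi> r \<in> orbit \<Phi> r"
    using \<open>\<phi> \<in> \<Phi>\<close> unfolding orbit_def by blast
  then show rep: "rep \<Phi> R (\<phi> r) = r"
    unfolding rep_def
    using presentation_ex1_rep[OF P presentation_orbit_nonzero[OF P \<open>\<phi> \<in> \<Phi>\<close> r]] \<open>r \<in> R\<close>
    by (blast intro: the1_equality)
  have "\<exists>!\<psi>. \<psi> \<in> \<Phi> \<and> \<phi> r = \<psi> r"
    using presentation_eq_if_agree[OF P _ _ r] \<open>\<phi> \<in> \<Phi>\<close> by metis
  then show "phi_of \<Phi> R (\<phi> r) = \<phi>"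
    unfolding phi_of_def rep using \<open>\<phi> \<in> \<Phi>\<close> by (blast intro: the1_equality)
qed

lemma phi_of_mem:
  assumes P: "presentation \<Phi> R M" and "a \<noteq> 0"
  shows "phi_of \<Phi> R a \<in> \<Phi>"
proof -
  obtain r where "r \<in> R" "a \<in> orbit \<Phi> r"
    using presentation_ex1_rep[OF P \<open>a \<noteq> 0\<close>] by blast
  then obtain \<phi> where "\<phi> \<in> \<Phi>" "a = \<phi> r"
    unfolding orbit_def by blast
  then show ?thesis
    using rep_phi_of_orbit(2)[OF P \<open>r \<in> R\<close>] by simp
qed

lemma nr_mult_orbit_rep:
  assumes P: "presentation \<Phi> R M" and "r \<in> R - M" and "\<phi> \<in> \<Phi>"
  shows "nr_mult \<Phi> R M d (\<phi> r) = \<phi> d"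
  using assms rep_phi_of_orbit[OF P] presentation_orbit_nonzero[OF P]
    presentation_rep_nonzero[OF P]
  unfolding nr_mult_def by auto

lemma planar_ex_nonzero_product:
  assumes "planar mult"
  shows "\<exists>x b. mult x b \<noteq> 0"
proof (rule ccontr)
  assume "\<nexists>x b. mult x b \<noteq> 0"
  then have "equiv_mult mult a b" for a b
    unfolding equiv_mult_def by simp
  then show False
    using assms unfolding planar_def by blast
qed

lemma presentation_planar_ex_nonzero_multiplier:
  assumes P: "presentation \<Phi> R M" and "planar (nr_mult \<Phi> R M)"
  shows "\<exists>r. r \<in> R - M"
proof -
  obtain x b where "nr_mult \<Phi> R M x b \<noteq> 0"
    using planar_ex_nonzero_product[OF assms(2)] by blast
  then have "b \<noteq> 0" and "rep \<Phi> R b \<notin> M"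
    unfolding nr_mult_def by (auto split: if_splits)
  moreover have "rep \<Phi> R b \<in> R"
    using theI'[OF presentation_ex1_rep[OF P \<open>b \<noteq> 0\<close>]] unfolding rep_def by blast
  ultimately show ?thesis
    by blast
qed

lemma orbit0_eq_range_nr_mult:
  assumes P: "presentation \<Phi> R M" and "r \<in> R - M"
  shows "orbit0 \<Phi> d = range (nr_mult \<Phi> R M d)"
proof
  show "range (nr_mult \<Phi> R M d) \<subseteq> orbit0 \<Phi> d"
    using phi_of_mem[OF P] unfolding nr_mult_def orbit0_def orbit_def by auto
  have "0 = nr_mult \<Phi> R M d 0"
    unfolding nr_mult_def by simp
  moreover have "\<phi> d \<in> range (nr_mult \<Phi> R M d)" if "\<phi> \<in> \<Phi>" for \<phi>
    using nr_mult_orbit_rep[OF P \<open>r \<in> R - M\<close> that, of d, symmetric] by (rule range_eqI)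
  ultimately show "orbit0 \<Phi> d \<subseteq> range (nr_mult \<Phi> R M d)"
    unfolding orbit0_def orbit_def by auto
qed

lemma distributive_elem_range_add_closed:
  assumes "d \<in> distributive_elems mult"
    and "x \<in> range (mult d)" and "y \<in> range (mult d)"
  shows "x + y \<in> range (mult d)"
proof -
  obtain a b where "x = mult d a" and "y = mult d b"
    using assms(2,3) by blast
  then have "x + y = mult d (a + b)"
    using assms(1) unfolding distributive_elems_def by simp
  then show ?thesis
    by simp
qed

theorem mainTheorem1:
  fixes \<Phi> :: "('a::group_add \<Rightarrow> 'a) set" and R M :: "'a set" and d :: 'a
  assumes "presentation \<Phi> R M"
    and "planar (nr_mult \<Phi> R M)"
    and "d \<in> distributive_elems (nr_mult \<Phi> R M)"
  shows "\<forall>x\<in>orbit0 \<Phi> d. \<forall>y\<in>orbit0 \<Phi> d. x + y \<in> orbit0 \<Phi> d"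
proof -
  obtain r where "r \<in> R - M"
    using presentation_planar_ex_nonzero_multiplier[OF assms(1,2)] by blast
  then have "orbit0 \<Phi> d = range (nr_mult \<Phi> R M d)"
    using orbit0_eq_range_nr_mult[OF assms(1)] by blast
  then show ?thesis
    using distributive_elem_range_add_closed[OF assms(3)] by simp
qed

end
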